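(* Let $\underline{T}=(T_1,\dots,T_k)$ be a tuple of contractions on a Hilbert space $\mathcal{H}$ and $q_{ij}\in\mathbb{T}$ ($1\le i<j\le k$) with $T_iT_j=q_{ij}T_jT_i$ for $i<j$, and let $u\subseteq\{1,\dots,k\}$. Then \[ S(u)=\sum_{v\subseteq u}(-1)^{|v|}(T^{e(v)})^*T^{e(v)}\ge0 \] in each of the following cases: (i) each $T_i$ is an isometry; (ii) $\|T_1\|^2+\dots+\|T_k\|^2\le1$. Here for $v=\{n_1<\dots<n_r\}$, $T^{e(v)}=T_{n_1}\cdots T_{n_r}$ and $T^{e(\emptyset)}=I$. *)

theory Defs
  imports "HOL-Analysis.Analysis"
begin

text \<open>A complex Hilbert space is modelled as a real Hilbert space (type class
real_inner + complete_space) together with a complex structure J (multiplication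
by the imaginary unit): J is real-linear, J (J x) = - x and J preserves the real
inner product.  The complex inner product is then
inner x y + i * inner x (J y), and the norm is the usual one.\<close>

definition complex_structure :: "('a::real_inner \<Rightarrow> 'a) \<Rightarrow> bool" where
  "complex_structure J \<longleftrightarrow> linear J \<and> (\<forall>x. J (J x) = - x) \<and>
     (\<forall>x y. inner (J x) (J y) = inner x y)"

definition cscale :: "('a::real_vector \<Rightarrow> 'a) \<Rightarrow> complex \<Rightarrow> 'a \<Rightarrow> 'a" where
  "cscale J c x = Re c *\<^sub>R x + Im c *\<^sub>R J x"

definition bounded_clinear_op :: "('a::real_normed_vector \<Rightarrow> 'a) \<Rightarrow> ('a \<Rightarrow> 'a) \<Rightarrow> bool" where
  "bounded_clinear_op J T \<longleftrightarrow> bounded_linear T \<and> (\<forall>x. T (J x) = J (T x))"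

definition contraction_op :: "('a::real_normed_vector \<Rightarrow> 'a) \<Rightarrow> ('a \<Rightarrow> 'a) \<Rightarrow> bool" where
  "contraction_op J T \<longleftrightarrow> bounded_clinear_op J T \<and> onorm T \<le> 1"

definition isometry_op :: "('a::real_normed_vector \<Rightarrow> 'a) \<Rightarrow> bool" where
  "isometry_op T \<longleftrightarrow> (\<forall>x. norm (T x) = norm x)"

definition multi_prod :: "(nat \<Rightarrow> 'a \<Rightarrow> 'a) \<Rightarrow> nat set \<Rightarrow> 'a \<Rightarrow> 'a" where
  "multi_prod T v = foldr (\<circ>) (map T (sorted_list_of_set v)) id"

end

theory Submission
  imports Defs
begin

(* Write s_A(x) = <S(A) x, x> = sum_{v <= A} (-1)^|v| |T^e(v) x|^2. If b exceeds every
   element of A, then T^e(v + {b}) = T^e(v) T_b for v <= A, so s_{A + {b}}(x) = s_A(x) - s_A(T_b x).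
   Building u up in increasing order, induction gives s_u = 0 for nonempty u when all T_i are
   isometries, and (1 - sum_{i in u} |T_i|^2) |x|^2 <= s_u(x) <= |x|^2 in general. *)

lemma sorted_list_of_set_insert_greater:
  fixes A :: "'a::linorder set"
  assumes "finite A" "\<forall>a\<in>A. a < b"
  shows "sorted_list_of_set (insert b A) = sorted_list_of_set A @ [b]"
proof -
  have "sorted_wrt (<) (sorted_list_of_set A @ [b]) \<and>
      set (sorted_list_of_set A @ [b]) = insert b A \<and>
      length (sorted_list_of_set A @ [b]) = card (insert b A)"
    using assms by (auto simp: sorted_wrt_append)
  then show ?thesis
    using assms(1) by (metis finite_insert sorted_list_of_set_unique)
qed

lemma foldr_comp_apply: "foldr (\<circ>) fs g x = foldr (\<circ>) fs id (g x)"
  by (induction fs arbitrary: x) auto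

lemma multi_prod_insert_greater:
  assumes "finite v" "\<forall>j\<in>v. j < i"
  shows "multi_prod T (insert i v) x = multi_prod T v (T i x)"
  using foldr_comp_apply[where g = "T i"]
  by (simp add: multi_prod_def sorted_list_of_set_insert_greater[OF assms])

definition defect_sum :: "(nat \<Rightarrow> 'a::real_normed_vector \<Rightarrow> 'a) \<Rightarrow> nat set \<Rightarrow> 'a \<Rightarrow> real" where
  "defect_sum T u x = (\<Sum>v\<in>Pow u. (-1) ^ card v * (norm (multi_prod T v x))\<^sup>2)"

lemma defect_sum_empty [simp]: "defect_sum T {} x = (norm x)\<^sup>2"
  by (simp add: defect_sum_def multi_prod_def)

lemma defect_sum_insert_greater:
  assumes A: "finite A" and less: "\<forall>a\<in>A. a < b"
  shows "defect_sum T (insert b A) x = defect_sum T A x - defect_sum T A (T b x)"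
proof -
  let ?f = "\<lambda>v. (-1) ^ card v * (norm (multi_prod T v x))\<^sup>2"
  have b: "b \<notin> A" using less by auto
  have inj: "inj_on (insert b) (Pow A)"
    using b by (intro inj_onI) (metis Diff_insert_absorb PowD subsetD)
  have "(\<Sum>v\<in>insert b ` Pow A. ?f v) = (\<Sum>v\<in>Pow A. ?f (insert b v))"
    by (simp add: sum.reindex[OF inj])
  also have "\<dots> = (\<Sum>v\<in>Pow A. - ((-1) ^ card v * (norm (multi_prod T v (T b x)))\<^sup>2))"
  proof (rule sum.cong)
    fix v assume "v \<in> Pow A"
    then have v: "finite v" "b \<notin> v" "\<forall>j\<in>v. j < b"
      using A b less finite_subset by auto
    show "?f (insert b v) = - ((-1) ^ card v * (norm (multi_prod T v (T b x)))\<^sup>2)"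
      using v by (simp add: multi_prod_insert_greater)
  qed simp
  finally have "(\<Sum>v\<in>insert b ` Pow A. ?f v) = - defect_sum T A (T b x)"
    by (simp add: defect_sum_def sum_negf)
  moreover have "defect_sum T (insert b A) x = defect_sum T A x + (\<Sum>v\<in>insert b ` Pow A. ?f v)"
    unfolding defect_sum_def Pow_insert using A b by (intro sum.union_disjoint) auto
  ultimately show ?thesis by simp
qed

lemma defect_sum_isometries:
  assumes "finite u" "\<forall>i\<in>u. isometry_op (T i)"
  shows "defect_sum T u x = (if u = {} then (norm x)\<^sup>2 else 0)"
  using assms
proof (induction u arbitrary: x rule: finite_linorder_max_induct)
  case (insert b A)
  then have "norm (T b x) = norm x" by (simp add: isometry_op_def)
  with insert show ?case by (simp add: defect_sum_insert_greater)
qed simp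

lemma defect_sum_bounds:
  assumes "finite u" "\<forall>i\<in>u. bounded_linear (T i)" "(\<Sum>i\<in>u. (onorm (T i))\<^sup>2) \<le> 1"
  shows "(1 - (\<Sum>i\<in>u. (onorm (T i))\<^sup>2)) * (norm x)\<^sup>2 \<le> defect_sum T u x
    \<and> defect_sum T u x \<le> (norm x)\<^sup>2"
  using assms
proof (induction u arbitrary: x rule: finite_linorder_max_induct)
  case (insert b A)
  let ?s = "\<Sum>i\<in>A. (onorm (T i))\<^sup>2"
  have sum_insert: "(\<Sum>i\<in>insert b A. (onorm (T i))\<^sup>2) = (onorm (T b))\<^sup>2 + ?s"
    using insert.hyps by (subst sum.insert) auto
  then have s: "?s \<le> 1"
    using insert.prems(2) by (smt (verit) zero_le_power2)
  then have IH: "(1 - ?s) * (norm y)\<^sup>2 \<le> defect_sum T A y \<and> defect_sum T A y \<le> (norm y)\<^sup>2" for y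
    using insert by simp
  have "norm (T b x) \<le> onorm (T b) * norm x"
    using insert.prems(1) by (simp add: onorm)
  then have Tb: "(norm (T b x))\<^sup>2 \<le> (onorm (T b))\<^sup>2 * (norm x)\<^sup>2"
    by (metis norm_ge_zero power_mono power_mult_distrib)
  have "0 \<le> (1 - ?s) * (norm (T b x))\<^sup>2"
    using s by simp
  then show ?case
    using IH[of x] IH[of "T b x"] Tb insert.hyps
    by (simp add: defect_sum_insert_greater sum_insert algebra_simps)
qed simp

theorem lemma4p6:
  fixes J :: "'a::{real_inner, complete_space} \<Rightarrow> 'a"
    and k :: nat
    and T :: "nat \<Rightarrow> 'a \<Rightarrow> 'a"
    and q :: "nat \<Rightarrow> nat \<Rightarrow> complex"
    and u :: "nat set"
  assumes J: "complex_structure J"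
    and contr: "\<forall>i\<in>{1..k}. contraction_op J (T i)"
    and q_unit: "\<forall>i j. 1 \<le> i \<and> i < j \<and> j \<le> k \<longrightarrow> cmod (q i j) = 1"
    and comm: "\<forall>i j. 1 \<le> i \<and> i < j \<and> j \<le> k \<longrightarrow>
                 (\<forall>x. T i (T j x) = cscale J (q i j) (T j (T i x)))"
    and u: "u \<subseteq> {1..k}"
    and cases: "(\<forall>i\<in>{1..k}. isometry_op (T i)) \<or> (\<Sum>i=1..k. (onorm (T i))\<^sup>2) \<le> 1"
  shows "\<forall>x. (\<Sum>v\<in>Pow u. (-1) ^ card v * (norm (multi_prod T v x))\<^sup>2) \<ge> (0::real)"
proof
  fix x
  have fin: "finite u" using u finite_subset by blast
  have "0 \<le> defect_sum T u x"
    using cases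
  proof
    assume "\<forall>i\<in>{1..k}. isometry_op (T i)"
    with u have "\<forall>i\<in>u. isometry_op (T i)" by auto
    then show ?thesis by (simp add: defect_sum_isometries[OF fin])
  next
    assume total: "(\<Sum>i=1..k. (onorm (T i))\<^sup>2) \<le> 1"
    have "(\<Sum>i\<in>u. (onorm (T i))\<^sup>2) \<le> (\<Sum>i=1..k. (onorm (T i))\<^sup>2)"
      using u by (intro sum_mono2) auto
    with total have small: "(\<Sum>i\<in>u. (onorm (T i))\<^sup>2) \<le> 1" by linarith
    have "\<forall>i\<in>u. bounded_linear (T i)"
      using u contr by (auto simp: contraction_op_def bounded_clinear_op_def)
    from defect_sum_bounds[OF fin this small, of x] small
    show ?thesis by (smt (verit) mult_nonneg_nonneg zero_le_power2)
  qed
  then show "(\<Sum>v\<in>Pow u. (-1) ^ card v * (norm (multi_prod T v x))\<^sup>2) \<ge> 0"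
    by (simp add: defect_sum_def)
qed

end
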